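(* Fix $\alpha\in(0,1)$, $d\ge2$, $a\in\mathbb{R}$, $w=(w_1,\dots,w_d)\in\mathbb{R}^d$, $\beta\in\mathbb{R}$, and $\Delta t>0$ with $\Delta t<1/C^2$ where $C=\max\{|a|,\max_i|w_i|\}$ (assume $C>0$). Define $T:\mathbb{R}^d\to\mathbb{R}^d$, $x\mapsto y$, by $y^{(i)}=x^{(i)}$ for $i=1,\dots,d-1$ and $y^{(d)}=x^{(d)}+a\,\Delta t\tanh(w\cdot x+\beta)$, where superscripts denote coordinates. Then for every compact $\mathcal{K}\subset\mathbb{R}^d$ and every $\varepsilon>0$ there exist $L\in\mathbb{N}$ and $f_L\in\mathcal{N}_d(L)$ with $\|T(x)-f_L(x)\|\le\varepsilon$ for all $x\in\mathcal{K}$.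
   Context: Leaky-ReLU: $\sigma_\alpha(x)=\max(\alpha x,x)$, applied componentwise. $\mathcal{N}_d(L)$ consists of all maps $f_L:\mathbb{R}^d\to\mathbb{R}^d$ defined recursively by $f_0(x)=W^{[0]}x+b^{[0]}$, $f_k(x)=W^{[k]}\sigma_\alpha(f_{k-1}(x))+b^{[k]}$ for $k=1,\dots,L$, with arbitrary $W^{[k]}\in\mathbb{R}^{d\times d}$, $b^{[k]}\in\mathbb{R}^d$. *)

theory Defs
  imports "HOL-Analysis.Analysis"
begin

definition lrelu :: "real \<Rightarrow> real \<Rightarrow> real" where
  "lrelu \<alpha> x = max (\<alpha> * x) x"

definition lrelu_vec :: "real \<Rightarrow> real^'n \<Rightarrow> real^'n" where
  "lrelu_vec \<alpha> v = (\<chi> i. lrelu \<alpha> (v $ i))"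

definition net_eval :: "real \<Rightarrow> real^'n^'n \<Rightarrow> real^'n \<Rightarrow> ((real^'n^'n) \<times> (real^'n)) list
    \<Rightarrow> real^'n \<Rightarrow> real^'n" where
  "net_eval \<alpha> W0 b0 Ls x =
     foldl (\<lambda>v (W, b). W *v lrelu_vec \<alpha> v + b) (W0 *v x + b0) Ls"

text \<open>The class N_d(L) (d is the dimension given by the index type 'n).\<close>
definition NN :: "real \<Rightarrow> nat \<Rightarrow> (real^'n \<Rightarrow> real^'n) set" where
  "NN \<alpha> L = {f. \<exists>W0 b0 Ls. length Ls = L \<and> f = net_eval \<alpha> W0 b0 Ls}"

end

theory Submission
  imports Defs
begin

text \<open>
  A composition of scalar units \<open>u \<mapsto> p \<sigma>(q u + r) + s\<close> with \<open>p, q \<noteq> 0\<close> is invertible, and on a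
  compact set it acts on a single coordinate of \<open>\<real>\<^sup>d\<close> as a width-\<open>d\<close> network: the other coordinates
  are shifted into the half-line where \<open>\<sigma>\<close> is the identity and shifted back. Affine maps are networks
  of depth zero and networks compose. A kink of slope \<open>\<alpha>\<^sup>-\<^sup>m\<close> followed by one of slope \<open>\<alpha>\<^sup>m\<close> is the
  identity on the left and a translation on the right; one such bump per cell of a fine grid turns
  the line of slope \<open>m\<^sub>1\<close> into a function that stays within one grid increment of any increasing
  \<open>h\<close> whose difference quotients lie in \<open>[m\<^sub>1, m\<^sub>2]\<close>, provided \<open>m\<^sub>2 < \<alpha>\<^sup>-\<^sup>m m\<^sub>1\<close>.

  If \<open>w\<^sub>d \<noteq> 0\<close>, replace \<open>x\<^sub>d\<close> by \<open>v = w \<bullet> x + \<beta>\<close>, apply an approximation of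
  \<open>v \<mapsto> v + w\<^sub>d a \<Delta>t tanh v\<close> (bi-Lipschitz and increasing because \<open>|w\<^sub>d a \<Delta>t| \<le> C\<^sup>2 \<Delta>t < 1\<close>), and
  solve back for \<open>x\<^sub>d\<close>. If \<open>w\<^sub>d = 0\<close> but \<open>w\<^sub>j \<noteq> 0\<close>, add \<open>\<kappa> v\<close> to \<open>x\<^sub>d\<close> and let \<open>x\<^sub>j\<close> carry \<open>v\<close>,
  approximate \<open>v \<mapsto> \<kappa> v - a \<Delta>t tanh v\<close> for large \<open>\<kappa>\<close>, subtract the result from coordinate \<open>d\<close>,
  then undo the units on coordinate \<open>j\<close> and recover \<open>x\<^sub>j\<close>. If \<open>w = 0\<close> the map is affine.
\<close>

section \<open>Networks and maps they represent on compact sets\<close>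

lemma net_eval_snoc:
  "net_eval \<alpha> W0 b0 (Ls @ [(W, b)]) x = W *v lrelu_vec \<alpha> (net_eval \<alpha> W0 b0 Ls x) + b"
  unfolding net_eval_def by simp

lemma affine_in_NN_0: "(\<lambda>x. A *v x + c) \<in> NN \<alpha> 0"
  unfolding NN_def net_eval_def by (intro CollectI exI[of _ A] exI[of _ c] exI[of _ "[]"]) auto

lemma NN_Suc_layer:
  assumes "f \<in> NN \<alpha> L"
  shows "(\<lambda>x. W *v lrelu_vec \<alpha> (f x) + b) \<in> NN \<alpha> (Suc L)"
proof -
  obtain W0 b0 Ls where "length Ls = L" "f = net_eval \<alpha> W0 b0 Ls"
    using assms unfolding NN_def by auto
  then show ?thesis unfolding NN_def
    by (intro CollectI exI[of _ W0] exI[of _ b0] exI[of _ "Ls @ [(W, b)]"])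
       (auto simp: net_eval_snoc)
qed

lemma NN_affine_post:
  assumes "f \<in> NN \<alpha> L"
  shows "(\<lambda>x. A *v f x + c) \<in> NN \<alpha> L"
proof -
  obtain W0 b0 Ls where L: "length Ls = L" and f: "f = net_eval \<alpha> W0 b0 Ls"
    using assms unfolding NN_def by auto
  show ?thesis
  proof (cases Ls rule: rev_exhaust)
    case Nil
    then have "(\<lambda>x. A *v f x + c) = (\<lambda>x. (A ** W0) *v x + (A *v b0 + c))"
      by (auto simp: f net_eval_def matrix_vector_right_distrib matrix_vector_mul_assoc)
    then show ?thesis using L Nil affine_in_NN_0[of "A ** W0" "A *v b0 + c" \<alpha>] by simp
  next
    case (snoc Ls' l)
    obtain W b where l: "l = (W, b)" by fastforce
    have "(\<lambda>x. A *v f x + c) = net_eval \<alpha> W0 b0 (Ls' @ [(A ** W, A *v b + c)])"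
      by (auto simp: f snoc l net_eval_snoc matrix_vector_right_distrib
          matrix_vector_mul_assoc add.assoc)
    then show ?thesis unfolding NN_def using L snoc
      by (intro CollectI exI[of _ W0] exI[of _ b0] exI[of _ "Ls' @ [(A ** W, A *v b + c)]"]) auto
  qed
qed

lemma NN_comp:
  assumes "g \<in> NN \<alpha> L2" "f \<in> NN \<alpha> L1"
  shows "g \<circ> f \<in> NN \<alpha> (L1 + L2)"
proof -
  obtain W0 b0 Ls where L: "length Ls = L2" and g: "g = net_eval \<alpha> W0 b0 Ls"
    using assms(1) unfolding NN_def by auto
  have "(\<lambda>x. net_eval \<alpha> W0 b0 Ls (f x)) \<in> NN \<alpha> (L1 + length Ls)"
  proof (induction Ls rule: rev_induct)
    case Nil
    then show ?case using NN_affine_post[OF assms(2)] by (simp add: net_eval_def)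
  next
    case (snoc l Ls)
    obtain W b where "l = (W, b)" by fastforce
    then show ?case using NN_Suc_layer[OF snoc.IH] by (simp add: net_eval_snoc)
  qed
  then show ?thesis using L g by (simp add: comp_def)
qed

lemma continuous_on_lrelu_vec [continuous_intros]:
  "continuous_on S f \<Longrightarrow> continuous_on S (\<lambda>x. lrelu_vec \<alpha> (f x))"
  unfolding lrelu_vec_def lrelu_def by (intro continuous_intros)

lemma continuous_on_NN:
  assumes "f \<in> NN \<alpha> L"
  shows "continuous_on S f"
proof -
  obtain W0 b0 Ls where f: "f = net_eval \<alpha> W0 b0 Ls"
    using assms unfolding NN_def by auto
  have "continuous_on S (net_eval \<alpha> W0 b0 Ls)"
  proof (induction Ls rule: rev_induct)
    case Nil
    show ?case unfolding net_eval_def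
      by (simp add: continuous_on_add bounded_linear.continuous_on[OF matrix_vector_mul_bounded_linear])
  next
    case (snoc l Ls)
    obtain W b where l: "l = (W, b)" by fastforce
    show ?case unfolding l net_eval_snoc
      by (intro continuous_on_add continuous_on_const continuous_on_lrelu_vec snoc.IH
          bounded_linear.continuous_on[OF matrix_vector_mul_bounded_linear])
  qed
  then show ?thesis using f by simp
qed

definition nn_on_compacts :: "real \<Rightarrow> (real^'n \<Rightarrow> real^'n) \<Rightarrow> bool" where
  "nn_on_compacts \<alpha> F \<longleftrightarrow> (\<forall>K. compact K \<longrightarrow> (\<exists>L. \<exists>f \<in> NN \<alpha> L. \<forall>x\<in>K. f x = F x))"

lemma nn_on_compacts_comp:
  assumes F: "nn_on_compacts \<alpha> F" and G: "nn_on_compacts \<alpha> G"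
  shows "nn_on_compacts \<alpha> (G \<circ> F)"
  unfolding nn_on_compacts_def
proof (intro allI impI)
  fix K :: "(real^'a) set"
  assume "compact K"
  then obtain L1 f where f: "f \<in> NN \<alpha> L1" "\<forall>x\<in>K. f x = F x"
    using F unfolding nn_on_compacts_def by blast
  have "compact (f ` K)"
    using continuous_on_NN[OF f(1)] \<open>compact K\<close> by (rule compact_continuous_image)
  then obtain L2 g where g: "g \<in> NN \<alpha> L2" "\<forall>y\<in>f ` K. g y = G y"
    using G unfolding nn_on_compacts_def by blast
  have "(g \<circ> f) x = (G \<circ> F) x" if "x \<in> K" for x
  proof -
    have "g (f x) = G (f x)" using g(2) that by blast
    then show ?thesis using f(2) that by simp
  qed
  then show "\<exists>L. \<exists>h\<in>NN \<alpha> L. \<forall>x\<in>K. h x = (G \<circ> F) x"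
    using NN_comp[OF g(1) f(1)] by blast
qed

lemma nn_on_compacts_affine:
  assumes "linear l"
  shows "nn_on_compacts \<alpha> (\<lambda>x. l x + c)"
proof -
  have "matrix l *v x = l x" for x
    using fun_cong[OF matrix_vector_mul(2)[OF assms]] by simp
  then have "(\<lambda>x. l x + c) \<in> NN \<alpha> 0"
    using affine_in_NN_0[of "matrix l" c \<alpha>] by simp
  then show ?thesis unfolding nn_on_compacts_def
    by (intro allI impI exI[of _ 0] bexI[of _ "\<lambda>x. l x + c"]) auto
qed

section \<open>Scalar leaky-ReLU units\<close>

lemma lrelu_nonneg: "0 \<le> z \<Longrightarrow> \<alpha> \<le> 1 \<Longrightarrow> lrelu \<alpha> z = z"
  unfolding lrelu_def by (rule max_absorb2) (use mult_right_mono[of \<alpha> 1 z] in simp)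

lemma lrelu_nonpos: "z \<le> 0 \<Longrightarrow> \<alpha> \<le> 1 \<Longrightarrow> lrelu \<alpha> z = \<alpha> * z"
  unfolding lrelu_def by (rule max_absorb1) (use mult_right_mono_neg[of \<alpha> 1 z] in simp)

lemma lrelu_minus_lrelu: "0 < \<alpha> \<Longrightarrow> \<alpha> \<le> 1 \<Longrightarrow> lrelu \<alpha> (- lrelu \<alpha> z) = - \<alpha> * z"
  using mult_pos_neg[of \<alpha> z]
  by (cases "0 \<le> z") (simp_all add: lrelu_nonneg lrelu_nonpos)

fun lrelu_unit :: "real \<Rightarrow> real \<times> real \<times> real \<times> real \<Rightarrow> real \<Rightarrow> real" where
  "lrelu_unit \<alpha> (p, q, r, s) u = p * lrelu \<alpha> (q * u + r) + s"

definition lrelu_units :: "real \<Rightarrow> (real \<times> real \<times> real \<times> real) list \<Rightarrow> real \<Rightarrow> real" where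
  "lrelu_units \<alpha> ls = fold (lrelu_unit \<alpha>) ls"

lemma lrelu_units_Nil [simp]: "lrelu_units \<alpha> [] u = u"
  unfolding lrelu_units_def by simp

lemma lrelu_units_Cons: "lrelu_units \<alpha> (l # ls) u = lrelu_units \<alpha> ls (lrelu_unit \<alpha> l u)"
  unfolding lrelu_units_def by simp

lemma lrelu_units_append: "lrelu_units \<alpha> (ls @ ls') u = lrelu_units \<alpha> ls' (lrelu_units \<alpha> ls u)"
  unfolding lrelu_units_def by simp

definition nonsingular_units :: "(real \<times> real \<times> real \<times> real) list \<Rightarrow> bool" where
  "nonsingular_units = list_all (\<lambda>(p, q, r, s). p \<noteq> 0 \<and> q \<noteq> 0)"

lemma nonsingular_units_append:
  "nonsingular_units (ls @ ls') \<longleftrightarrow> nonsingular_units ls \<and> nonsingular_units ls'"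
  unfolding nonsingular_units_def by simp

fun lrelu_unit_inv :: "real \<Rightarrow> real \<times> real \<times> real \<times> real \<Rightarrow> real \<times> real \<times> real \<times> real" where
  "lrelu_unit_inv \<alpha> (p, q, r, s) = (- 1 / (\<alpha> * q), - 1 / p, s / p, - r / q)"

definition lrelu_units_inv :: "real \<Rightarrow> (real \<times> real \<times> real \<times> real) list \<Rightarrow> (real \<times> real \<times> real \<times> real) list" where
  "lrelu_units_inv \<alpha> ls = rev (map (lrelu_unit_inv \<alpha>) ls)"

lemma lrelu_unit_inv_left:
  assumes "0 < \<alpha>" "\<alpha> \<le> 1" "p \<noteq> 0" "q \<noteq> 0"
  shows "lrelu_unit \<alpha> (lrelu_unit_inv \<alpha> (p, q, r, s)) (lrelu_unit \<alpha> (p, q, r, s) u) = u"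
proof -
  have "- 1 / p * (p * lrelu \<alpha> (q * u + r) + s) + s / p = - lrelu \<alpha> (q * u + r)"
    using assms by (simp add: field_simps)
  then show ?thesis using assms by (simp add: lrelu_minus_lrelu field_simps)
qed

lemma lrelu_units_inv_left:
  assumes "0 < \<alpha>" "\<alpha> \<le> 1" "nonsingular_units ls"
  shows "lrelu_units \<alpha> (lrelu_units_inv \<alpha> ls) (lrelu_units \<alpha> ls u) = u"
  using assms(3)
proof (induction ls arbitrary: u)
  case (Cons l ls)
  obtain p q r s where l: "l = (p, q, r, s)" by (cases l)
  then have "nonsingular_units ls" "p \<noteq> 0" "q \<noteq> 0"
    using Cons.prems unfolding nonsingular_units_def by auto
  then show ?case
    using Cons.IH lrelu_unit_inv_left[OF assms(1,2)]
    by (simp add: l lrelu_units_inv_def lrelu_units_append lrelu_units_Cons)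
qed (simp add: lrelu_units_inv_def)

lemma lrelu_units_affine:
  assumes "0 < \<alpha>" "\<alpha> \<le> 1"
  shows "lrelu_units \<alpha> [(1, 1, 0, 0), (- A / \<alpha>, - 1, 0, B)] u = A * u + B"
  using assms by (simp add: lrelu_units_Cons lrelu_minus_lrelu)

section \<open>Approximating increasing bi-Lipschitz functions by units\<close>

definition kink :: "real \<Rightarrow> real \<Rightarrow> real \<Rightarrow> real" where
  "kink c \<rho> y = (if y \<le> c then y else c + \<rho> * (y - c))"

lemma kink_kink: "0 < \<rho>' \<Longrightarrow> kink c \<rho> (kink c \<rho>' y) = kink c (\<rho> * \<rho>') y"
  unfolding kink_def by (auto simp: algebra_simps)

lemma mono_kink: "0 \<le> \<rho> \<Longrightarrow> mono (kink c \<rho>)"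
  unfolding kink_def by (rule monoI) (auto simp: mult_left_mono intro!: add_increasing2)

lemma lrelu_units_replicate_kink_up:
  assumes "0 < \<alpha>" "\<alpha> \<le> 1"
  shows "lrelu_units \<alpha> (replicate m (1 / \<alpha>, 1, - c, c)) y = kink c ((1 / \<alpha>) ^ m) y"
proof (induction m arbitrary: y)
  case 0 then show ?case by (simp add: kink_def)
next
  case (Suc m)
  have "lrelu_unit \<alpha> (1 / \<alpha>, 1, - c, c) y = kink c (1 / \<alpha>) y"
    using assms by (simp add: kink_def lrelu_nonneg lrelu_nonpos)
  then show ?case using Suc assms by (simp add: lrelu_units_Cons kink_kink)
qed

lemma lrelu_units_replicate_kink_down:
  assumes "0 < \<alpha>" "\<alpha> \<le> 1"
  shows "lrelu_units \<alpha> (replicate m (- 1, - 1, c, c)) y = kink c (\<alpha> ^ m) y"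
proof (induction m arbitrary: y)
  case 0 then show ?case by (simp add: kink_def)
next
  case (Suc m)
  have "lrelu_unit \<alpha> (- 1, - 1, c, c) y = kink c \<alpha> y"
    using assms by (simp add: kink_def lrelu_nonneg lrelu_nonpos algebra_simps)
  then show ?case using Suc assms by (simp add: lrelu_units_Cons kink_kink mult.commute)
qed

definition kink_bump :: "real \<Rightarrow> real \<Rightarrow> real \<Rightarrow> real \<Rightarrow> real" where
  "kink_bump \<rho> z e y = kink (z + e) (1 / \<rho>) (kink (z - e / (\<rho> - 1)) \<rho> y)"

lemma kink_bump:
  assumes "1 < \<rho>" "0 \<le> e"
  shows mono_kink_bump: "mono (kink_bump \<rho> z e)"
    and kink_bump_below: "y \<le> z - e / (\<rho> - 1) \<Longrightarrow> kink_bump \<rho> z e y = y"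
    and kink_bump_above: "z \<le> y \<Longrightarrow> kink_bump \<rho> z e y = y + e"
proof -
  define y1 where "y1 = z - e / (\<rho> - 1)"
  have B: "kink_bump \<rho> z e y = kink (z + e) (1 / \<rho>) (kink y1 \<rho> y)" for y
    unfolding kink_bump_def y1_def ..
  show "mono (kink_bump \<rho> z e)"
    using mono_kink[of \<rho> y1] mono_kink[of "1 / \<rho>" "z + e"] assms(1)
    by (simp add: mono_def B)
  have "e / (\<rho> - 1) \<ge> 0" using assms(1,2) by simp
  then show "y \<le> z - e / (\<rho> - 1) \<Longrightarrow> kink_bump \<rho> z e y = y"
    using assms(2) unfolding kink_bump_def kink_def by auto
  assume "z \<le> y"
  then have "y1 \<le> y"
    using \<open>e / (\<rho> - 1) \<ge> 0\<close> unfolding y1_def by linarith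
  then have "kink y1 \<rho> y = y1 + \<rho> * (y - y1)"
    unfolding kink_def by (cases "y = y1") auto
  also have "\<dots> = z + e + \<rho> * (y - z)"
  proof -
    have "\<rho> * (e / (\<rho> - 1)) = e + e / (\<rho> - 1)" using assms(1) by (simp add: field_simps)
    then show ?thesis unfolding y1_def by (simp add: algebra_simps)
  qed
  finally have "kink y1 \<rho> y = z + e + \<rho> * (y - z)" .
  moreover have "0 \<le> \<rho> * (y - z)" using \<open>z \<le> y\<close> assms(1) by simp
  ultimately show "kink_bump \<rho> z e y = y + e"
    using assms(1) unfolding B kink_def by auto
qed

lemma kink_bump_step:
  fixes g :: "real \<Rightarrow> real"
  assumes "1 < \<rho>" "0 < m1" "0 < \<delta>" "m1 * \<delta> \<le> D" "D \<le> \<rho> * m1 * \<delta>"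
    and g_left: "\<And>u. u \<le> t \<Longrightarrow> g u \<le> c"
    and g_right: "\<And>u. t \<le> u \<Longrightarrow> g u = c + m1 * (u - t)"
  defines "B \<equiv> kink_bump \<rho> (c + m1 * \<delta>) (D - m1 * \<delta>)"
  shows "u \<le> t \<Longrightarrow> B (g u) = g u"
    and "t \<le> u \<Longrightarrow> c \<le> B (g u)"
    and "u \<le> t + \<delta> \<Longrightarrow> B (g u) \<le> c + D"
    and "t + \<delta> \<le> u \<Longrightarrow> B (g u) = c + D + m1 * (u - (t + \<delta>))"
proof -
  have e: "0 \<le> D - m1 * \<delta>" using assms(4) by simp
  note below = kink_bump_below[OF assms(1) e, where z = "c + m1 * \<delta>", folded B_def]
    and above = kink_bump_above[OF assms(1) e, where z = "c + m1 * \<delta>", folded B_def]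
    and mono = mono_kink_bump[OF assms(1) e, where z = "c + m1 * \<delta>", folded B_def, THEN monoD]
  have "D - m1 * \<delta> \<le> (\<rho> - 1) * (m1 * \<delta>)" using assms(5) by (simp add: algebra_simps)
  then have c_below: "c \<le> c + m1 * \<delta> - (D - m1 * \<delta>) / (\<rho> - 1)"
    using assms(1) by (simp add: pos_divide_le_eq mult.commute)
  show "B (g u) = g u" if "u \<le> t"
    using order_trans[OF g_left[OF that] c_below] by (rule below)
  show "t \<le> u \<Longrightarrow> c \<le> B (g u)"
    using mono[of c "g u"] below[OF c_below] g_right assms(2) by simp
  have "g u \<le> c + m1 * \<delta>" if "u \<le> t + \<delta>" for u
  proof (cases "u \<le> t")
    case True
    then show ?thesis using g_left assms(2,3) by (simp add: add_increasing2)
  next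
    case False
    then show ?thesis using g_right that assms(2) by simp
  qed
  then show "u \<le> t + \<delta> \<Longrightarrow> B (g u) \<le> c + D"
    using mono above[of "c + m1 * \<delta>"] by fastforce
  assume "t + \<delta> \<le> u"
  then have g: "g u = c + m1 * (u - t)" using g_right assms(3) by simp
  then have "c + m1 * \<delta> \<le> g u" using \<open>t + \<delta> \<le> u\<close> assms(2) by simp
  then have "B (g u) = g u + (D - m1 * \<delta>)" by (rule above)
  then show "B (g u) = c + D + m1 * (u - (t + \<delta>))"
    unfolding g by (simp add: algebra_simps)
qed

definition kink_bump_units :: "real \<Rightarrow> nat \<Rightarrow> real \<Rightarrow> real \<Rightarrow> (real \<times> real \<times> real \<times> real) list" where
  "kink_bump_units \<alpha> m z e =
    (let y1 = z - e / ((1 / \<alpha>) ^ m - 1)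
     in replicate m (1 / \<alpha>, 1, - y1, y1) @ replicate m (- 1, - 1, z + e, z + e))"

lemma lrelu_units_kink_bump_units:
  assumes "0 < \<alpha>" "\<alpha> \<le> 1"
  shows "lrelu_units \<alpha> (kink_bump_units \<alpha> m z e) y = kink_bump ((1 / \<alpha>) ^ m) z e y"
  unfolding kink_bump_units_def Let_def lrelu_units_append kink_bump_def
    lrelu_units_replicate_kink_up[OF assms] lrelu_units_replicate_kink_down[OF assms]
  by (simp add: power_one_over)

lemma nonsingular_kink_bump_units: "0 < \<alpha> \<Longrightarrow> nonsingular_units (kink_bump_units \<alpha> m z e)"
  by (auto simp: nonsingular_units_def kink_bump_units_def Let_def list_all_iff)

lemma lrelu_units_grid_step:
  fixes h :: "real \<Rightarrow> real"
  assumes \<alpha>: "0 < \<alpha>" "\<alpha> < 1" and "0 < m1" "0 < \<delta>" and m: "m2 < (1 / \<alpha>) ^ m * m1"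
    and h: "\<And>x y. x \<le> y \<Longrightarrow> m1 * (y - x) \<le> h y - h x \<and> h y - h x \<le> m2 * (y - x)"
    and ls: "nonsingular_units ls" "\<forall>u\<in>{a..t}. \<bar>lrelu_units \<alpha> ls u - h u\<bar> \<le> m2 * \<delta>"
      "\<forall>u\<le>t. lrelu_units \<alpha> ls u \<le> h t" "\<forall>u\<ge>t. lrelu_units \<alpha> ls u = h t + m1 * (u - t)"
  shows "\<exists>ls'. nonsingular_units ls' \<and> (\<forall>u\<in>{a..t + \<delta>}. \<bar>lrelu_units \<alpha> ls' u - h u\<bar> \<le> m2 * \<delta>)
      \<and> (\<forall>u\<le>t + \<delta>. lrelu_units \<alpha> ls' u \<le> h (t + \<delta>))
      \<and> (\<forall>u\<ge>t + \<delta>. lrelu_units \<alpha> ls' u = h (t + \<delta>) + m1 * (u - (t + \<delta>)))"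
proof -
  have "m1 < (1 / \<alpha>) ^ m * m1" using m h[of 0 1] by simp
  then have "1 < (1 / \<alpha>) ^ m" using mult_less_cancel_right1 \<open>0 < m1\<close> by auto
  have h_mono: "h x \<le> h y" if "x \<le> y" for x y
    using h[OF that] mult_nonneg_nonneg[of m1 "y - x"] \<open>0 < m1\<close> that by linarith
  define D where "D = h (t + \<delta>) - h t"
  have "m1 * \<delta> \<le> D \<and> D \<le> m2 * \<delta>"
    using h[of t "t + \<delta>"] \<open>0 < \<delta>\<close> by (simp add: D_def)
  moreover have "m2 * \<delta> \<le> (1 / \<alpha>) ^ m * m1 * \<delta>"
    using m \<open>0 < \<delta>\<close> by (intro mult_right_mono) auto
  ultimately have D: "m1 * \<delta> \<le> D" "D \<le> (1 / \<alpha>) ^ m * m1 * \<delta>" "D \<le> m2 * \<delta>"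
    by auto
  let ?ls = "ls @ kink_bump_units \<alpha> m (h t + m1 * \<delta>) (D - m1 * \<delta>)"
  have g': "lrelu_units \<alpha> ?ls u
      = kink_bump ((1 / \<alpha>) ^ m) (h t + m1 * \<delta>) (D - m1 * \<delta>) (lrelu_units \<alpha> ls u)" for u
    using \<alpha> by (simp add: lrelu_units_append lrelu_units_kink_bump_units)
  note step = kink_bump_step[where g = "lrelu_units \<alpha> ls" and c = "h t",
      OF \<open>1 < (1 / \<alpha>) ^ m\<close> \<open>0 < m1\<close> \<open>0 < \<delta>\<close> D(1,2) ls(3)[rule_format] ls(4)[rule_format],
      folded g']
  have hD: "h t + D = h (t + \<delta>)" by (simp add: D_def)
  have "\<bar>lrelu_units \<alpha> ?ls u - h u\<bar> \<le> m2 * \<delta>" if "u \<in> {a..t + \<delta>}" for u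
  proof (cases "u \<le> t")
    case True
    then show ?thesis using step(1) ls(2) that by simp
  next
    case False
    then have "h t \<le> lrelu_units \<alpha> ?ls u" "lrelu_units \<alpha> ?ls u \<le> h t + D"
      "h t \<le> h u" "h u \<le> h t + D"
      using step(2,3) h_mono[of t u] h_mono[of u "t + \<delta>"] that by (auto simp: hD)
    then show ?thesis using D(3) by (simp add: abs_le_iff)
  qed
  moreover have "nonsingular_units ?ls"
    using ls(1) nonsingular_kink_bump_units[OF \<alpha>(1)] by (simp add: nonsingular_units_append)
  ultimately show ?thesis
    using step(3,4) by (intro exI[of _ ?ls]) (simp add: hD)
qed

lemma lrelu_units_grid_approx:
  fixes h :: "real \<Rightarrow> real" and a :: real
  assumes \<alpha>: "0 < \<alpha>" "\<alpha> < 1" and "0 < m1" "0 < \<delta>" and m: "m2 < (1 / \<alpha>) ^ m * m1"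
    and h: "\<And>x y. x \<le> y \<Longrightarrow> m1 * (y - x) \<le> h y - h x \<and> h y - h x \<le> m2 * (y - x)"
  shows "\<exists>ls. nonsingular_units ls \<and> (\<forall>u\<in>{a..a + real k * \<delta>}. \<bar>lrelu_units \<alpha> ls u - h u\<bar> \<le> m2 * \<delta>)"
proof -
  have "\<exists>ls. nonsingular_units ls
      \<and> (\<forall>u\<in>{a..a + real k * \<delta>}. \<bar>lrelu_units \<alpha> ls u - h u\<bar> \<le> m2 * \<delta>)
      \<and> (\<forall>u\<le>a + real k * \<delta>. lrelu_units \<alpha> ls u \<le> h (a + real k * \<delta>))
      \<and> (\<forall>u\<ge>a + real k * \<delta>. lrelu_units \<alpha> ls u = h (a + real k * \<delta>) + m1 * (u - (a + real k * \<delta>)))"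
  proof (induction k)
    case 0
    let ?ls = "[(1, 1, 0, 0), (- m1 / \<alpha>, - 1, 0, h a - m1 * a)]"
    have "lrelu_units \<alpha> ?ls u = h a + m1 * (u - a)" for u
      using lrelu_units_affine[of \<alpha> m1 "h a - m1 * a" u] \<alpha> by (simp add: algebra_simps)
    moreover have "nonsingular_units ?ls"
      using \<alpha> \<open>0 < m1\<close> by (simp add: nonsingular_units_def)
    moreover have "0 \<le> m2 * \<delta>" using h[of 0 1] \<open>0 < m1\<close> \<open>0 < \<delta>\<close> by simp
    ultimately show ?case
      using \<open>0 < m1\<close> by (intro exI[of _ ?ls]) (auto simp: mult_nonneg_nonpos)
  next
    case (Suc k)
    have eq: "a + real (Suc k) * \<delta> = a + real k * \<delta> + \<delta>" by (simp add: algebra_simps)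
    show ?case
      unfolding eq using Suc.IH
      by (elim exE conjE) (rule lrelu_units_grid_step[OF \<alpha> \<open>0 < m1\<close> \<open>0 < \<delta>\<close> m h]; assumption)
  qed
  then show ?thesis by blast
qed

lemma lrelu_units_approx:
  fixes h :: "real \<Rightarrow> real"
  assumes \<alpha>: "0 < \<alpha>" "\<alpha> < 1" and "0 < m1" and "0 < \<epsilon>"
    and h: "\<And>x y. x \<le> y \<Longrightarrow> m1 * (y - x) \<le> h y - h x \<and> h y - h x \<le> m2 * (y - x)"
  shows "\<exists>ls. nonsingular_units ls \<and> (\<forall>u\<in>{a..b}. \<bar>lrelu_units \<alpha> ls u - h u\<bar> \<le> \<epsilon>)"
proof -
  have "0 < m2" using h[of 0 1] \<open>0 < m1\<close> by simp
  obtain m where "m2 / m1 < (1 / \<alpha>) ^ m"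
    using real_arch_pow[of "1 / \<alpha>" "m2 / m1"] \<alpha> by auto
  then have m: "m2 < (1 / \<alpha>) ^ m * m1"
    using \<open>0 < m1\<close> by (simp add: pos_divide_less_eq)
  define \<delta> where "\<delta> = \<epsilon> / m2"
  have "0 < \<delta>" "m2 * \<delta> = \<epsilon>"
    using \<open>0 < m2\<close> \<open>0 < \<epsilon>\<close> by (simp_all add: \<delta>_def)
  obtain N where "(b - a) / \<delta> \<le> real N" using real_arch_simple by blast
  then have "b \<le> a + real N * \<delta>" using \<open>0 < \<delta>\<close> by (simp add: pos_divide_le_eq)
  then show ?thesis
    using lrelu_units_grid_approx[where a = a and k = N, OF \<alpha> \<open>0 < m1\<close> \<open>0 < \<delta>\<close> m h]
      \<open>m2 * \<delta> = \<epsilon>\<close> by auto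
qed

section \<open>Units acting on one coordinate\<close>

lemma diagonal_matrix_vector_mult:
  "(\<chi> i k. if i = k then c i else 0) *v x = (\<chi> i. c i * x $ i)"
  unfolding matrix_vector_mult_def by (simp add: vec_eq_iff if_distrib[of "\<lambda>z. z * _"] cong: if_cong)

lemma norm_diff_eq_abs_nth:
  fixes x y :: "real^'n"
  assumes "\<And>i. i \<noteq> d \<Longrightarrow> x $ i = y $ i"
  shows "norm (x - y) = \<bar>x $ d - y $ d\<bar>"
proof -
  have "x - y = (x $ d - y $ d) *\<^sub>R axis d 1"
    using assms by (auto simp: vec_eq_iff axis_def)
  then show ?thesis by simp
qed

definition coord_upd :: "'n \<Rightarrow> (real^'n \<Rightarrow> real) \<Rightarrow> real^'n \<Rightarrow> real^'n" where
  "coord_upd j \<psi> x = (\<chi> i. if i = j then \<psi> x else x $ i)"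

lemma coord_upd_nth [simp]: "coord_upd j \<psi> x $ i = (if i = j then \<psi> x else x $ i)"
  unfolding coord_upd_def by simp

lemma inner_coord_upd: "w \<bullet> coord_upd j \<psi> x = w \<bullet> x + w $ j * (\<psi> x - x $ j)"
proof -
  have "coord_upd j \<psi> x = x + (\<psi> x - x $ j) *\<^sub>R axis j 1"
    by (auto simp: vec_eq_iff axis_def)
  then show ?thesis by (simp add: inner_add_right inner_axis)
qed

lemma nn_on_compacts_coord_upd_affine:
  assumes "\<And>x. \<psi> x = c * x $ j + u \<bullet> x + b"
  shows "nn_on_compacts \<alpha> (coord_upd j \<psi>)"
proof -
  have "linear (coord_upd j (\<lambda>x. c * x $ j + u \<bullet> x))"
    by (rule linearI) (simp_all add: vec_eq_iff inner_add_right algebra_simps)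
  then have "nn_on_compacts \<alpha> (\<lambda>x. coord_upd j (\<lambda>x. c * x $ j + u \<bullet> x) x + axis j b)"
    by (rule nn_on_compacts_affine)
  moreover have "coord_upd j (\<lambda>x. c * x $ j + u \<bullet> x) x + axis j b = coord_upd j \<psi> x" for x
    using assms by (simp add: vec_eq_iff axis_def)
  ultimately show ?thesis by simp
qed

lemma nn_on_compacts_coord_upd_solve:
  assumes "w $ j \<noteq> 0"
  shows "nn_on_compacts \<alpha> (coord_upd j (\<lambda>y. y $ j + (y $ j - (w \<bullet> y + \<beta>)) / w $ j))"
  by (rule nn_on_compacts_coord_upd_affine[where c = "1 + 1 / w $ j" and u = "- (1 / w $ j) *\<^sub>R w"
        and b = "- \<beta> / w $ j"]) (use assms in \<open>simp add: field_simps\<close>)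

lemma nn_on_compacts_coord_unit:
  fixes j :: "'n::finite"
  assumes "\<alpha> \<le> 1"
  shows "nn_on_compacts \<alpha> (coord_upd j (\<lambda>x. lrelu_unit \<alpha> l (x $ j)))"
  unfolding nn_on_compacts_def
proof (intro allI impI)
  fix K :: "(real^'n) set"
  assume "compact K"
  then obtain B where B: "\<forall>x\<in>K. norm x \<le> B"
    using compact_imp_bounded bounded_iff by blast
  obtain p q r s where l: "l = (p, q, r, s)" by (cases l)
  \<comment> \<open>The other coordinates are shifted by \<open>B\<close> into the region where \<open>lrelu \<alpha>\<close> is the identity.\<close>
  define f where "f x = (\<chi> i k. if i = k then (if i = j then p else 1) else 0) *v
      lrelu_vec \<alpha> ((\<chi> i k. if i = k then (if i = j then q else 1) else 0) *v x
        + (\<chi> i. if i = j then r else B)) + (\<chi> i. if i = j then s else - B)" for x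
  have "f \<in> NN \<alpha> (Suc 0)"
    unfolding f_def by (rule NN_Suc_layer[OF affine_in_NN_0])
  moreover have "f x = coord_upd j (\<lambda>x. lrelu_unit \<alpha> l (x $ j)) x" if "x \<in> K" for x
  proof -
    have "0 \<le> x $ i + B" for i
      using component_le_norm_cart[of x i] B that by (auto simp: abs_le_iff)
    then show ?thesis
      using assms by (simp add: f_def l diagonal_matrix_vector_mult lrelu_vec_def vec_eq_iff lrelu_nonneg)
  qed
  ultimately show "\<exists>L. \<exists>f\<in>NN \<alpha> L. \<forall>x\<in>K. f x = coord_upd j (\<lambda>x. lrelu_unit \<alpha> l (x $ j)) x"
    by blast
qed

lemma nn_on_compacts_coord_units:
  assumes "\<alpha> \<le> 1"
  shows "nn_on_compacts \<alpha> (coord_upd j (\<lambda>x. lrelu_units \<alpha> ls (x $ j)))"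
proof (induction ls rule: rev_induct)
  case Nil
  show ?case by (rule nn_on_compacts_coord_upd_affine[of _ 1 j 0 0]) simp
next
  case (snoc l ls)
  have "coord_upd j (\<lambda>x. lrelu_units \<alpha> (ls @ [l]) (x $ j))
      = coord_upd j (\<lambda>x. lrelu_unit \<alpha> l (x $ j)) \<circ> coord_upd j (\<lambda>x. lrelu_units \<alpha> ls (x $ j))"
    by (simp add: fun_eq_iff vec_eq_iff lrelu_units_append lrelu_units_Cons)
  then show ?case
    using nn_on_compacts_comp[OF snoc.IH nn_on_compacts_coord_unit[OF assms]] by (simp only:)
qed

section \<open>Shifting one coordinate by a function of a linear form\<close>

lemma lipschitz_perturbation_bounds:
  fixes \<phi> :: "real \<Rightarrow> real"
  assumes "M-lipschitz_on UNIV \<phi>" "x \<le> y"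
  shows "(c - \<bar>k\<bar> * M) * (y - x) \<le> (c * y + k * \<phi> y) - (c * x + k * \<phi> x)
    \<and> (c * y + k * \<phi> y) - (c * x + k * \<phi> x) \<le> (c + \<bar>k\<bar> * M) * (y - x)"
proof -
  have "\<bar>\<phi> y - \<phi> x\<bar> \<le> M * (y - x)"
    using lipschitz_onD[OF assms(1), of y x] assms(2) by (simp add: dist_real_def)
  then have "\<bar>k * (\<phi> y - \<phi> x)\<bar> \<le> \<bar>k\<bar> * M * (y - x)"
    by (simp add: abs_mult mult.assoc mult_left_mono)
  moreover have "(c * y + k * \<phi> y) - (c * x + k * \<phi> x) = c * (y - x) + k * (\<phi> y - \<phi> x)"
    "(c - \<bar>k\<bar> * M) * (y - x) = c * (y - x) - \<bar>k\<bar> * M * (y - x)"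
    "(c + \<bar>k\<bar> * M) * (y - x) = c * (y - x) + \<bar>k\<bar> * M * (y - x)"
    by (simp_all add: algebra_simps)
  ultimately show ?thesis by (simp only: abs_le_iff) linarith
qed

lemma compact_imp_bounded_affine_functional:
  fixes K :: "(real^'n) set"
  assumes "compact K"
  obtains V where "\<forall>x\<in>K. \<bar>w \<bullet> x + \<beta>\<bar> \<le> V"
proof -
  have "compact ((\<lambda>x. w \<bullet> x + \<beta>) ` K)"
    by (intro compact_continuous_image continuous_intros assms)
  then show ?thesis
    using that compact_imp_bounded bounded_iff by (metis (no_types, lifting) image_eqI real_norm_def)
qed

lemma coord_shift_approx_pivot:
  fixes w :: "real^'n" and d :: 'n
  assumes \<alpha>: "0 < \<alpha>" "\<alpha> < 1" and wd: "w $ d \<noteq> 0"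
    and \<phi>: "M-lipschitz_on UNIV \<phi>" and "\<bar>w $ d\<bar> * M < 1"
    and "compact K" "0 < \<epsilon>"
  shows "\<exists>F. nn_on_compacts \<alpha> F \<and>
    (\<forall>x\<in>K. norm (coord_upd d (\<lambda>x. x $ d + \<phi> (w \<bullet> x + \<beta>)) x - F x) \<le> \<epsilon>)"
proof -
  obtain V where V: "\<forall>x\<in>K. \<bar>w \<bullet> x + \<beta>\<bar> \<le> V"
    using compact_imp_bounded_affine_functional[OF \<open>compact K\<close>] by blast
  define h where "h v = 1 * v + w $ d * \<phi> v" for v
  have "(1 - \<bar>w $ d\<bar> * M) * (y - x) \<le> h y - h x \<and> h y - h x \<le> (1 + \<bar>w $ d\<bar> * M) * (y - x)"
    if "x \<le> y" for x y
    unfolding h_def by (rule lipschitz_perturbation_bounds[OF \<phi> that])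
  moreover have "0 < 1 - \<bar>w $ d\<bar> * M" "0 < \<epsilon> * \<bar>w $ d\<bar>" using assms by simp_all
  ultimately obtain ls where ls: "\<forall>v\<in>{- V..V}. \<bar>lrelu_units \<alpha> ls v - h v\<bar> \<le> \<epsilon> * \<bar>w $ d\<bar>"
    using lrelu_units_approx[where a = "- V" and b = V, OF \<alpha>] by blast
  define F where "F = coord_upd d (\<lambda>y. y $ d + (y $ d - (w \<bullet> y + \<beta>)) / w $ d)
    \<circ> coord_upd d (\<lambda>y. lrelu_units \<alpha> ls (y $ d)) \<circ> coord_upd d (\<lambda>x. w \<bullet> x + \<beta>)"
  have "nn_on_compacts \<alpha> (coord_upd d (\<lambda>x. w \<bullet> x + \<beta>))"
    by (rule nn_on_compacts_coord_upd_affine[where c = 0 and u = w and b = \<beta>]) simp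
  then have "nn_on_compacts \<alpha> F"
    unfolding F_def using nn_on_compacts_coord_units[OF less_imp_le[OF \<alpha>(2)]]
      nn_on_compacts_coord_upd_solve[OF wd] by (intro nn_on_compacts_comp)
  moreover have "norm (coord_upd d (\<lambda>x. x $ d + \<phi> (w \<bullet> x + \<beta>)) x - F x) \<le> \<epsilon>" if "x \<in> K" for x
  proof -
    define v where "v = w \<bullet> x + \<beta>"
    have "F x $ d = x $ d + (lrelu_units \<alpha> ls v - v) / w $ d"
      using wd by (simp add: F_def inner_coord_upd v_def field_simps)
    then have "norm (coord_upd d (\<lambda>x. x $ d + \<phi> (w \<bullet> x + \<beta>)) x - F x)
        = \<bar>lrelu_units \<alpha> ls v - h v\<bar> / \<bar>w $ d\<bar>"
      using wd by (subst norm_diff_eq_abs_nth[of d]) (auto simp: F_def v_def h_def field_simps)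
    also have "\<dots> \<le> \<epsilon>"
    proof -
      have "v \<in> {- V..V}" using V that by (auto simp: v_def abs_le_iff)
      then show ?thesis using ls wd by (simp add: pos_divide_le_eq)
    qed
    finally show ?thesis .
  qed
  ultimately show ?thesis by blast
qed

lemma coord_shift_approx_transfer:
  fixes w :: "real^'n" and d j :: 'n
  assumes \<alpha>: "0 < \<alpha>" "\<alpha> < 1" and wd: "w $ d = 0" and wj: "w $ j \<noteq> 0"
    and \<phi>: "M-lipschitz_on UNIV \<phi>" and "compact K" "0 < \<epsilon>"
  shows "\<exists>F. nn_on_compacts \<alpha> F \<and>
    (\<forall>x\<in>K. norm (coord_upd d (\<lambda>x. x $ d + \<phi> (w \<bullet> x + \<beta>)) x - F x) \<le> \<epsilon>)"
proof -
  have "j \<noteq> d" using wd wj by auto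
  have "M \<ge> 0" using \<phi> by (rule lipschitz_on_nonneg)
  obtain V where V: "\<forall>x\<in>K. \<bar>w \<bullet> x + \<beta>\<bar> \<le> V"
    using compact_imp_bounded_affine_functional[OF \<open>compact K\<close>] by blast
  define \<kappa> where "\<kappa> = M + 1"
  define h where "h v = \<kappa> * v + (- 1) * \<phi> v" for v
  have h: "1 * (y - x) \<le> h y - h x \<and> h y - h x \<le> (\<kappa> + M) * (y - x)" if "x \<le> y" for x y
    using lipschitz_perturbation_bounds[OF \<phi> that, of \<kappa> "- 1"] by (simp add: h_def \<kappa>_def)
  obtain ls where ls: "nonsingular_units ls" "\<forall>v\<in>{- V..V}. \<bar>lrelu_units \<alpha> ls v - h v\<bar> \<le> \<epsilon>"
    using lrelu_units_approx[where a = "- V" and b = V, OF \<alpha> zero_less_one \<open>0 < \<epsilon>\<close> h] by blast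
  define F where "F = coord_upd j (\<lambda>y. y $ j + (y $ j - (w \<bullet> y + \<beta>)) / w $ j)
    \<circ> coord_upd j (\<lambda>y. lrelu_units \<alpha> (lrelu_units_inv \<alpha> ls) (y $ j))
    \<circ> coord_upd d (\<lambda>y. y $ d - y $ j)
    \<circ> coord_upd j (\<lambda>y. lrelu_units \<alpha> ls (y $ j))
    \<circ> coord_upd j (\<lambda>x. w \<bullet> x + \<beta>)
    \<circ> coord_upd d (\<lambda>x. x $ d + \<kappa> * (w \<bullet> x + \<beta>))"
  note units = nn_on_compacts_coord_units[OF less_imp_le[OF \<alpha>(2)]]
  have "nn_on_compacts \<alpha> (coord_upd d (\<lambda>x. x $ d + \<kappa> * (w \<bullet> x + \<beta>)))"
    by (rule nn_on_compacts_coord_upd_affine[where c = 1 and u = "\<kappa> *\<^sub>R w" and b = "\<kappa> * \<beta>"])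
      (simp add: algebra_simps)
  moreover have "nn_on_compacts \<alpha> (coord_upd j (\<lambda>x. w \<bullet> x + \<beta>))"
    by (rule nn_on_compacts_coord_upd_affine[where c = 0 and u = w and b = \<beta>]) simp
  moreover have "nn_on_compacts \<alpha> (coord_upd d (\<lambda>y. y $ d - y $ j))"
    by (rule nn_on_compacts_coord_upd_affine[where c = 1 and u = "- axis j 1" and b = 0])
      (simp add: inner_axis')
  ultimately have "nn_on_compacts \<alpha> F"
    unfolding F_def using units nn_on_compacts_coord_upd_solve[OF wj] by (intro nn_on_compacts_comp)
  moreover have "norm (coord_upd d (\<lambda>x. x $ d + \<phi> (w \<bullet> x + \<beta>)) x - F x) \<le> \<epsilon>" if "x \<in> K" for x
  proof -
    define v where "v = w \<bullet> x + \<beta>"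
    have F: "F x = coord_upd d (\<lambda>y. x $ d + \<kappa> * v - lrelu_units \<alpha> ls v) x"
      using wd wj \<open>j \<noteq> d\<close> lrelu_units_inv_left[OF \<alpha>(1) less_imp_le[OF \<alpha>(2)] ls(1)]
      by (simp add: F_def vec_eq_iff inner_coord_upd v_def field_simps)
    have "v \<in> {- V..V}" using V that by (auto simp: v_def abs_le_iff)
    then have "\<bar>lrelu_units \<alpha> ls v - h v\<bar> \<le> \<epsilon>" using ls(2) by blast
    moreover have "norm (coord_upd d (\<lambda>x. x $ d + \<phi> (w \<bullet> x + \<beta>)) x - F x) = \<bar>lrelu_units \<alpha> ls v - h v\<bar>"
      by (subst norm_diff_eq_abs_nth[of d]) (auto simp: F v_def h_def algebra_simps)
    ultimately show ?thesis by simp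
  qed
  ultimately show ?thesis by blast
qed

lemma coord_shift_approx:
  fixes w :: "real^'n" and d :: 'n
  assumes \<alpha>: "0 < \<alpha>" "\<alpha> < 1" and \<phi>: "M-lipschitz_on UNIV \<phi>" and "\<bar>w $ d\<bar> * M < 1"
    and "compact K" "0 < \<epsilon>"
  shows "\<exists>F. nn_on_compacts \<alpha> F \<and>
    (\<forall>x\<in>K. norm (coord_upd d (\<lambda>x. x $ d + \<phi> (w \<bullet> x + \<beta>)) x - F x) \<le> \<epsilon>)"
proof (cases "w = 0")
  case True
  have "nn_on_compacts \<alpha> (coord_upd d (\<lambda>x. x $ d + \<phi> (w \<bullet> x + \<beta>)))"
    by (rule nn_on_compacts_coord_upd_affine[where c = 1 and u = 0 and b = "\<phi> \<beta>"]) (simp add: True)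
  then show ?thesis using \<open>0 < \<epsilon>\<close> by (intro exI) auto
next
  case False
  then obtain j where "w $ j \<noteq> 0" by (auto simp: vec_eq_iff)
  then show ?thesis
    using coord_shift_approx_pivot[OF \<alpha> _ \<phi> assms(4-6)] coord_shift_approx_transfer[OF \<alpha> _ _ \<phi> assms(5,6)]
    by (cases "w $ d = 0") blast+
qed

lemma lipschitz_on_tanh: "1-lipschitz_on UNIV (tanh :: real \<Rightarrow> real)"
proof (rule lipschitz_on_leI)
  fix x y :: real
  assume "x \<le> y"
  have "(\<lambda>z. z - tanh z) x \<le> (\<lambda>z. z - tanh z) y"
  proof (rule DERIV_nonneg_imp_nondecreasing[OF \<open>x \<le> y\<close>])
    fix z :: real
    have "DERIV (\<lambda>z. z - tanh z) z :> 1 - (1 - tanh z ^ 2)"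
      by (auto intro!: derivative_eq_intros)
    then show "\<exists>D. DERIV (\<lambda>z. z - tanh z) z :> D \<and> 0 \<le> D" by force
  qed
  moreover have "tanh x \<le> tanh y"
    using tanh_real_strict_mono \<open>x \<le> y\<close> by (simp add: strict_mono_less_eq)
  ultimately show "dist (tanh x) (tanh y) \<le> 1 * dist x y"
    using \<open>x \<le> y\<close> by (simp add: dist_real_def)
qed simp

theorem mainTheorem9:
  fixes \<alpha> a \<beta> dt :: real
    and w :: "real^'n::{finite,linorder}"
  assumes "0 < \<alpha>" "\<alpha> < 1"
    and "CARD('n) \<ge> 2"
    and "max \<bar>a\<bar> (Max {\<bar>w $ i\<bar> | i. True}) > 0"
    and "0 < dt"
    and "dt < 1 / (max \<bar>a\<bar> (Max {\<bar>w $ i\<bar> | i. True}))\<^sup>2"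
  shows "\<forall>K.  compact K \<longrightarrow> (\<forall>\<epsilon>>0. \<exists>L::nat. \<exists>f \<in> NN \<alpha> L.
           \<forall>x\<in>K. norm ((\<chi> i. if i = Max UNIV then x $ i + a * dt * tanh (w \<bullet> x + \<beta>)
                              else x $ i) - f x) \<le> \<epsilon>)"
proof (intro allI impI)
  fix K :: "(real^'n::{finite,linorder}) set" and \<epsilon> :: real
  assume "compact K" "0 < \<epsilon>"
  define C where "C = max \<bar>a\<bar> (Max {\<bar>w $ i\<bar> | i. True})"
  have "\<bar>w $ Max UNIV\<bar> \<le> C" "\<bar>a\<bar> \<le> C"
    unfolding C_def by (auto intro!: max.coboundedI2 Max_ge simp: full_SetCompr_eq)
  then have "\<bar>w $ Max UNIV\<bar> * (\<bar>a * dt\<bar> * 1) \<le> C * C * dt"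
    using \<open>0 < dt\<close> by (simp add: abs_mult mult_mono mult.assoc)
  also have "\<dots> < 1"
    using assms(4,6) \<open>0 < dt\<close> by (simp add: C_def less_divide_eq power2_eq_square mult.commute)
  finally obtain F where F: "nn_on_compacts \<alpha> F" and approx:
    "\<forall>x\<in>K. norm (coord_upd (Max UNIV) (\<lambda>x. x $ Max UNIV + a * dt * tanh (w \<bullet> x + \<beta>)) x - F x) \<le> \<epsilon>"
    using coord_shift_approx[OF assms(1,2) lipschitz_on_cmult_real[OF lipschitz_on_tanh]]
      \<open>compact K\<close> \<open>0 < \<epsilon>\<close> by blast
  then obtain L f where f: "f \<in> NN \<alpha> L" "\<forall>x\<in>K. f x = F x"
    using \<open>compact K\<close> unfolding nn_on_compacts_def by blast
  moreover have "(\<chi> i. if i = Max UNIV then x $ i + a * dt * tanh (w \<bullet> x + \<beta>) else x $ i)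
      = coord_upd (Max UNIV) (\<lambda>x. x $ Max UNIV + a * dt * tanh (w \<bullet> x + \<beta>)) x" for x
    by (simp add: vec_eq_iff)
  ultimately show "\<exists>L. \<exists>f\<in>NN \<alpha> L. \<forall>x\<in>K. norm ((\<chi> i. if i = Max UNIV
      then x $ i + a * dt * tanh (w \<bullet> x + \<beta>) else x $ i) - f x) \<le> \<epsilon>"
    using approx by (intro exI[of _ L] bexI[of _ f]) auto
qed

end
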